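(* For $p\in\mathbb{R}$ let $H_p:[0,\infty)^2\to[0,\infty)$ be $$H_p(r,t)=\frac{2}{p}\Big[\mathfrak{M}_1(r,t)-\mathfrak{M}_{1-p}(r,t)\Big]\ (p\neq 0),\qquad H_0(r,t)=r\ln r+t\ln t-(r+t)\ln\Big(\frac{r+t}{2}\Big)$$ (with $0\ln 0=0$). Then for every $p\in(-\infty,\tfrac12]\cup[1,+\infty)$ the function $\sqrt{H_p}$ is a metric on $[0,+\infty)$. For every $p\in(\tfrac12,1)$, $\sqrt{H_p}$ does not satisfy the triangle inequality on $[0,+\infty)$.
   Context: Power means: for $r,t\ge 0$ and $q\neq 0$, $\mathfrak{M}_q(r,t)=\big(\frac{r^q+t^q}{2}\big)^{1/q}$, except that $\mathfrak{M}_q(r,t)=0$ when $q<0$ and $r=0$ or $t=0$; $\mathfrak{M}_0(r,t)=\sqrt{rt}$. The function $H_p$ is the marginal perspective function $H_{U_p}$ induced by the power-like entropy $U_p(s)=\frac{1}{p(p-1)}(s^p-p(s-1)-1)$ ($p\neq0,1$), $U_1(s)=s\ln s-s+1$, $U_0(s)=s-1-\ln s$, i.e. the lower semicontinuous envelope of $(r,t)\mapsto\inf_{\theta>0}\big[tU_p(\theta/t)+rU_p(\theta/r)\big]$; the closed formula above is given. A function $D:[0,\infty)^2\to[0,\infty)$ is a metric on $[0,\infty)$ if $D(x,y)=0\iff x=y$, $D$ is symmetric, and $D(x,z)\le D(x,y)+D(y,z)$ for all $x,y,z$. *)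

theory Defs
  imports Complex_Main
begin

definition power_mean :: "real \<Rightarrow> real \<Rightarrow> real \<Rightarrow> real" where
  "power_mean q r t =
     (if q = 0 then sqrt (r * t)
      else if q < 0 \<and> (r = 0 \<or> t = 0) then 0
      else ((r powr q + t powr q) / 2) powr (1 / q))"

definition xlnx :: "real \<Rightarrow> real" where
  "xlnx x = (if x = 0 then 0 else x * ln x)"

definition H :: "real \<Rightarrow> real \<Rightarrow> real \<Rightarrow> real" where
  "H p r t =
     (if p = 0 then xlnx r + xlnx t - (if r + t = 0 then 0 else (r + t) * ln ((r + t) / 2))
      else (2 / p) * (power_mean 1 r t - power_mean (1 - p) r t))"

definition metric_on_nonneg :: "(real \<Rightarrow> real \<Rightarrow> real) \<Rightarrow> bool" where
  "metric_on_nonneg D \<longleftrightarrow>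
     (\<forall>x\<ge>0. \<forall>y\<ge>0. D x y = 0 \<longleftrightarrow> x = y) \<and>
     (\<forall>x\<ge>0. \<forall>y\<ge>0. D x y = D y x) \<and>
     (\<forall>x\<ge>0. \<forall>y\<ge>0. \<forall>z\<ge>0. D x z \<le> D x y + D y z)"

definition triangle_on_nonneg :: "(real \<Rightarrow> real \<Rightarrow> real) \<Rightarrow> bool" where
  "triangle_on_nonneg D \<longleftrightarrow> (\<forall>x\<ge>0. \<forall>y\<ge>0. \<forall>z\<ge>0. D x z \<le> D x y + D y z)"

end

theory Submission
  imports Defs "HOL-Real_Asymp.Real_Asymp"
begin

text \<open>
  \<open>H\<^sub>p\<close> is symmetric and positively 1-homogeneous, so it is determined by the profile
  \<open>F(s) = H\<^sub>p(s\<^sup>2, 1)\<close>: for \<open>0 \<le> u < v\<close> one has \<open>H\<^sub>p(u\<^sup>2, v\<^sup>2) = (v - u)\<^sup>2 G(u/v)\<close> with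
  \<open>G(s) = F(s)/(1 - s)\<^sup>2\<close>.  If \<open>F\<close> decreases on \<open>[0,1]\<close>, increases on \<open>[1,\<infinity>)\<close> and \<open>G\<close> is
  increasing on \<open>[0,1)\<close>, then \<open>\<surd>H\<^sub>p\<close> satisfies the triangle inequality in the coordinates
  \<open>u = \<surd>r\<close>, because the outer pair of three ordered points has the smallest ratio \<open>u/v\<close>.

  Since \<open>F(1) = F'(1) = 0\<close>, the derivative of \<open>G\<close> has the sign of
  \<open>Q = (1 - s) F' + 2 F\<close>, where \<open>Q(1) = Q'(1) = 0\<close> and \<open>Q'' = (1 - s) F'''\<close>.  Hence \<open>G\<close> is
  increasing when \<open>F''' > 0\<close> on \<open>(0,1)\<close> and decreasing when \<open>F''' < 0\<close>.  For \<open>p \<noteq> 0, 1\<close> the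
  sign of \<open>F'''\<close> on \<open>(0,1)\<close> is that of \<open>(1 - 2p)(1 - p)\<close>; the case \<open>p = 0\<close> is computed
  directly, and for \<open>p \<in> {1/2, 1}\<close> one has \<open>H\<^sub>p(r,t) = (\<surd>r - \<surd>t)\<^sup>2\<close>.  For \<open>1/2 < p < 1\<close>
  the quotient \<open>G\<close> strictly decreases, and the points \<open>1, 4, 9\<close> violate the triangle
  inequality.
\<close>

lemma third_derivative_pos_imp_weighted_pos:
  fixes F F' F'' F''' :: "real \<Rightarrow> real"
  assumes F: "\<And>s. 0 < s \<Longrightarrow> (F has_real_derivative F' s) (at s)"
    and F': "\<And>s. 0 < s \<Longrightarrow> (F' has_real_derivative F'' s) (at s)"
    and F'': "\<And>s. 0 < s \<Longrightarrow> (F'' has_real_derivative F''' s) (at s)"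
    and F_1: "F 1 = 0" and F'_1: "F' 1 = 0"
    and F'''_pos: "\<And>s. 0 < s \<Longrightarrow> s < 1 \<Longrightarrow> F''' s > 0"
    and s: "0 < s" "s < 1"
  shows "(1 - s) * F' s + 2 * F s > 0"
proof -
  define Q where "Q x = (1 - x) * F' x + 2 * F x" for x
  define Q' where "Q' x = F' x + (1 - x) * F'' x" for x
  have Q: "(Q has_real_derivative Q' x) (at x)" if "0 < x" for x
    unfolding Q_def[abs_def] Q'_def using F[OF that] F'[OF that]
    by (auto intro!: derivative_eq_intros simp: algebra_simps)
  have Q': "(Q' has_real_derivative (1 - x) * F''' x) (at x)" if "0 < x" for x
    unfolding Q'_def[abs_def] using F'[OF that] F''[OF that]
    by (auto intro!: derivative_eq_intros)
  have Q'_neg: "Q' x < 0" if "0 < x" "x < 1" for x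
  proof -
    have "Q' x < Q' 1"
    proof (rule DERIV_pos_imp_increasing_open[OF \<open>x < 1\<close>])
      show "\<exists>z. DERIV Q' y :> z \<and> z > 0" if "x < y" "y < 1" for y
        using Q' F'''_pos \<open>0 < x\<close> that by force
      show "continuous_on {x..1} Q'"
        by (intro continuous_at_imp_continuous_on ballI DERIV_isCont[OF Q']) (use \<open>0 < x\<close> in auto)
    qed
    then show ?thesis using F'_1 by (simp add: Q'_def)
  qed
  have "Q 1 < Q s"
  proof (rule DERIV_neg_imp_decreasing_open[OF \<open>s < 1\<close>])
    show "\<exists>z. DERIV Q y :> z \<and> z < 0" if "s < y" "y < 1" for y
      using Q Q'_neg s that by force
    show "continuous_on {s..1} Q"
      by (intro continuous_at_imp_continuous_on ballI DERIV_isCont[OF Q]) (use s in auto)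
  qed
  then show ?thesis using F_1 F'_1 by (simp add: Q_def)
qed

lemma third_derivative_pos_imp_quotient_strict_mono:
  fixes F F' F'' F''' :: "real \<Rightarrow> real"
  assumes F: "\<And>s. 0 < s \<Longrightarrow> (F has_real_derivative F' s) (at s)"
    and F': "\<And>s. 0 < s \<Longrightarrow> (F' has_real_derivative F'' s) (at s)"
    and F'': "\<And>s. 0 < s \<Longrightarrow> (F'' has_real_derivative F''' s) (at s)"
    and F_1: "F 1 = 0" and F'_1: "F' 1 = 0"
    and F'''_pos: "\<And>s. 0 < s \<Longrightarrow> s < 1 \<Longrightarrow> F''' s > 0"
    and F_cont: "continuous_on {0..1} F"
    and ab: "0 \<le> a" "a < b" "b < 1"
  shows "F a / (1 - a)^2 < F b / (1 - b)^2"
proof (rule DERIV_pos_imp_increasing_open[OF \<open>a < b\<close>])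
  fix y assume y: "a < y" "y < b"
  define u where "u = 1 - y"
  have "u > 0" using y ab by (simp add: u_def)
  have "((\<lambda>x. F x / (1 - x)^2) has_real_derivative
          (F' y * u^2 - F y * (2 * u * -1)) / (u^2 * u^2)) (at y)"
    unfolding u_def using y ab by (auto intro!: DERIV_divide F derivative_eq_intros)
  also have "(F' y * u^2 - F y * (2 * u * -1)) / (u^2 * u^2) = (u * F' y + 2 * F y) / u^3"
    using \<open>u > 0\<close> by (simp add: field_simps power2_eq_square power3_eq_cube)
  finally have "((\<lambda>x. F x / (1 - x)^2) has_real_derivative (u * F' y + 2 * F y) / u^3) (at y)" .
  moreover have "(u * F' y + 2 * F y) / u^3 > 0"
    using third_derivative_pos_imp_weighted_pos[OF F F' F'' F_1 F'_1 F'''_pos, of y] y ab \<open>u > 0\<close>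
    by (simp add: u_def)
  ultimately show "\<exists>z. DERIV (\<lambda>x. F x / (1 - x)^2) y :> z \<and> z > 0" by blast
next
  show "continuous_on {a..b} (\<lambda>x. F x / (1 - x)^2)"
    using ab by (intro continuous_intros continuous_on_subset[OF F_cont]) auto
qed

locale sym_homogeneous =
  fixes h :: "real \<Rightarrow> real \<Rightarrow> real"
  assumes sym: "\<And>r t. 0 \<le> r \<Longrightarrow> 0 \<le> t \<Longrightarrow> h r t = h t r"
    and homogeneous: "\<And>c r t. 0 < c \<Longrightarrow> 0 \<le> r \<Longrightarrow> 0 \<le> t \<Longrightarrow> h (c * r) (c * t) = c * h r t"
begin

definition profile :: "real \<Rightarrow> real" where
  "profile s = h (s^2) 1"

definition profile_quot :: "real \<Rightarrow> real" where
  "profile_quot s = profile s / (1 - s)^2"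

lemma h_zero_zero: "h 0 0 = 0"
  using homogeneous[of 2 0 0] by simp

lemma h_sq_eq_profile:
  assumes "0 \<le> u" "0 < v"
  shows "h (u^2) (v^2) = v^2 * profile (u / v)"
proof -
  have "h (u^2) (v^2) = h (v^2 * (u / v)^2) (v^2 * 1)"
    using assms by (simp add: field_simps)
  also have "\<dots> = v^2 * h ((u / v)^2) 1"
    using assms by (intro homogeneous) auto
  finally show ?thesis by (simp add: profile_def)
qed

lemma sqrt_h_sq_eq:
  assumes "0 \<le> u" "u < v"
  shows "sqrt (h (u^2) (v^2)) = (v - u) * sqrt (profile_quot (u / v))"
proof -
  have "1 - u / v = (v - u) / v" using assms by (simp add: field_simps)
  then have "h (u^2) (v^2) = (v - u)^2 * profile_quot (u / v)"
    using h_sq_eq_profile[of u v] assms by (simp add: profile_quot_def power_divide)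
  then have "sqrt (h (u^2) (v^2)) = sqrt ((v - u)^2) * sqrt (profile_quot (u / v))"
    by (simp only: real_sqrt_mult)
  with assms show ?thesis by simp
qed

end

locale profile_metric = sym_homogeneous +
  assumes profile_1: "profile 1 = 0"
    and profile_pos: "\<And>s. 0 \<le> s \<Longrightarrow> s < 1 \<Longrightarrow> profile s > 0"
    and profile_antimono: "\<And>s t. 0 \<le> s \<Longrightarrow> s \<le> t \<Longrightarrow> t \<le> 1 \<Longrightarrow> profile t \<le> profile s"
    and profile_mono: "\<And>s t. 1 \<le> s \<Longrightarrow> s \<le> t \<Longrightarrow> profile s \<le> profile t"
    and profile_quot_mono: "\<And>s t. 0 \<le> s \<Longrightarrow> s \<le> t \<Longrightarrow> t < 1 \<Longrightarrow> profile_quot s \<le> profile_quot t"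
begin

lemma profile_nonneg: "0 \<le> s \<Longrightarrow> 0 \<le> profile s"
  using profile_pos[of s] profile_mono[of 1 s] profile_1 by (cases "s < 1") auto

lemma h_sq_nonneg:
  assumes "0 \<le> u" "0 \<le> v"
  shows "0 \<le> h (u^2) (v^2)"
proof (cases "v = 0")
  case True
  then show ?thesis
    using h_sq_eq_profile[of v u] profile_nonneg[of "v / u"] sym[of "u^2" "v^2"] assms h_zero_zero
    by (cases "u = 0") auto
next
  case False
  then show ?thesis using h_sq_eq_profile[of u v] profile_nonneg[of "u / v"] assms by simp
qed

lemma h_sq_pos:
  assumes "0 \<le> u" "0 \<le> v" "u \<noteq> v"
  shows "0 < h (u^2) (v^2)"
proof -
  have pos: "0 < h (a^2) (b^2)" if "0 \<le> a" "a < b" for a b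
    using h_sq_eq_profile[of a b] profile_pos[of "a / b"] that by simp
  show ?thesis
  proof (cases "u < v")
    case False
    then have "0 < h (v^2) (u^2)" using pos[of v u] assms by simp
    then show ?thesis using sym by simp
  qed (use pos assms in blast)
qed

lemma h_diag: "0 \<le> r \<Longrightarrow> h r r = 0"
  using h_sq_eq_profile[of "sqrt r" "sqrt r"] profile_1 h_zero_zero by (cases "r = 0") auto

text \<open>By \<open>sqrt_h_sq_eq\<close> each side is its length times \<open>sqrt (profile_quot s)\<close>, and the ratio
  \<open>a / c\<close> of the long side is below both ratios \<open>a / b\<close> and \<open>b / c\<close> of the short ones.\<close>
lemma triangle_ordered:
  assumes "0 \<le> a" "a \<le> b" "b \<le> c"
  shows "sqrt (h (a^2) (c^2)) \<le> sqrt (h (a^2) (b^2)) + sqrt (h (b^2) (c^2))"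
proof (cases "a = b \<or> b = c")
  case True
  then show ?thesis using h_diag by auto
next
  case False
  then have ab: "a < b" "b < c" using assms by auto
  have "a / c \<le> a / b" using ab assms by (intro divide_left_mono) auto
  then have G1: "profile_quot (a / c) \<le> profile_quot (a / b)"
    using ab assms by (intro profile_quot_mono) auto
  have G2: "profile_quot (a / c) \<le> profile_quot (b / c)"
    using ab assms by (intro profile_quot_mono) (auto simp: divide_le_eq divide_right_mono)
  have "sqrt (h (a^2) (c^2))
      = (b - a) * sqrt (profile_quot (a / c)) + (c - b) * sqrt (profile_quot (a / c))"
    using sqrt_h_sq_eq[of a c] ab assms by (simp add: algebra_simps)
  also have "\<dots> \<le> (b - a) * sqrt (profile_quot (a / b)) + (c - b) * sqrt (profile_quot (b / c))"
    using G1 G2 ab by (intro add_mono mult_left_mono) auto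
  also have "\<dots> = sqrt (h (a^2) (b^2)) + sqrt (h (b^2) (c^2))"
    using sqrt_h_sq_eq[of a b] sqrt_h_sq_eq[of b c] ab assms by simp
  finally show ?thesis .
qed

lemma h_sq_antimono_left:
  assumes "0 \<le> a" "a \<le> b" "b \<le> c"
  shows "h (b^2) (c^2) \<le> h (a^2) (c^2)"
proof (cases "c = 0")
  case False
  then show ?thesis
    using h_sq_eq_profile[of a c] h_sq_eq_profile[of b c] assms profile_antimono[of "a / c" "b / c"]
    by (auto intro!: mult_left_mono divide_right_mono simp: divide_le_eq)
next
  case True
  then have "a = 0" "b = 0" using assms by auto
  then show ?thesis by simp
qed

lemma h_sq_mono_right:
  assumes "0 \<le> a" "a \<le> b" "b \<le> c"
  shows "h (a^2) (b^2) \<le> h (a^2) (c^2)"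
proof (cases "a = 0")
  case True
  then show ?thesis
    using h_sq_eq_profile[of 0 b] h_sq_eq_profile[of 0 c] h_sq_nonneg[of 0 c] profile_nonneg[of 0]
      assms h_zero_zero
    by (cases "b = 0") (auto intro!: mult_right_mono power_mono)
next
  case False
  then have "h (b^2) (a^2) \<le> h (c^2) (a^2)"
    using h_sq_eq_profile[of b a] h_sq_eq_profile[of c a] assms profile_mono[of "b / a" "c / a"]
    by (auto intro!: mult_left_mono divide_right_mono simp: le_divide_eq)
  then show ?thesis using sym by simp
qed

lemma triangle_sq:
  assumes "0 \<le> a" "0 \<le> b" "0 \<le> c"
  shows "sqrt (h (a^2) (c^2)) \<le> sqrt (h (a^2) (b^2)) + sqrt (h (b^2) (c^2))"
proof -
  have sym_sq: "h (u^2) (v^2) = h (v^2) (u^2)" for u v using sym by simp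
  have wlog: "sqrt (h (x^2) (z^2)) \<le> sqrt (h (x^2) (b^2)) + sqrt (h (b^2) (z^2))"
    if "0 \<le> x" "x \<le> z" for x z
  proof -
    consider "b \<le> x" | "x \<le> b" "b \<le> z" | "z \<le> b" by linarith
    then show ?thesis
    proof cases
      case 1
      have "sqrt (h (x^2) (z^2)) \<le> sqrt (h (b^2) (z^2))"
        by (intro real_sqrt_le_mono h_sq_antimono_left) (use 1 that assms in auto)
      then show ?thesis using h_sq_nonneg[of x b] that assms by (smt (verit) real_sqrt_ge_zero)
    next
      case 2
      then show ?thesis using triangle_ordered that by simp
    next
      case 3
      have "sqrt (h (x^2) (z^2)) \<le> sqrt (h (x^2) (b^2))"
        by (intro real_sqrt_le_mono h_sq_mono_right) (use 3 that in auto)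
      then show ?thesis using h_sq_nonneg[of b z] that assms by (smt (verit) real_sqrt_ge_zero)
    qed
  qed
  show ?thesis
    using wlog[of a c] wlog[of c a] assms sym_sq[of a b] sym_sq[of b c] sym_sq[of a c]
    by (cases "a \<le> c") auto
qed

theorem metric: "metric_on_nonneg (\<lambda>x y. sqrt (h x y))"
  unfolding metric_on_nonneg_def
proof (intro conjI allI impI)
  fix x y z :: real assume "0 \<le> x" "0 \<le> y" "0 \<le> z"
  then show "sqrt (h x z) \<le> sqrt (h x y) + sqrt (h y z)"
    using triangle_sq[of "sqrt x" "sqrt y" "sqrt z"] by simp
next
  fix x y :: real assume "0 \<le> x" "0 \<le> y"
  then show "(sqrt (h x y) = 0) = (x = y)"
    using h_sq_pos[of "sqrt x" "sqrt y"] h_diag by fastforce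
  show "sqrt (h x y) = sqrt (h y x)" using sym \<open>0 \<le> x\<close> \<open>0 \<le> y\<close> by simp
qed

end

context sym_homogeneous
begin

lemma metric_if_profile_derivatives:
  fixes F' F'' F''' :: "real \<Rightarrow> real"
  assumes F: "\<And>s. 0 < s \<Longrightarrow> (profile has_real_derivative F' s) (at s)"
    and F': "\<And>s. 0 < s \<Longrightarrow> (F' has_real_derivative F'' s) (at s)"
    and F'': "\<And>s. 0 < s \<Longrightarrow> (F'' has_real_derivative F''' s) (at s)"
    and F_1: "profile 1 = 0" and F'_1: "F' 1 = 0"
    and F'''_pos: "\<And>s. 0 < s \<Longrightarrow> s < 1 \<Longrightarrow> F''' s > 0"
    and F'_nonpos: "\<And>s. 0 < s \<Longrightarrow> s < 1 \<Longrightarrow> F' s \<le> 0"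
    and F'_nonneg: "\<And>s. 1 < s \<Longrightarrow> F' s \<ge> 0"
    and F_cont: "continuous_on {0..1} profile"
  shows "metric_on_nonneg (\<lambda>x y. sqrt (h x y))"
proof -
  have quot_strict_mono: "profile_quot a < profile_quot b" if "0 \<le> a" "a < b" "b < 1" for a b
    using third_derivative_pos_imp_quotient_strict_mono[OF F F' F'' F_1 F'_1 F'''_pos F_cont that]
    by (simp add: profile_quot_def)
  have antimono: "profile t \<le> profile s" if "0 \<le> s" "s \<le> t" "t \<le> 1" for s t
  proof (rule DERIV_nonpos_imp_decreasing_open[OF \<open>s \<le> t\<close>])
    show "\<exists>y. DERIV profile x :> y \<and> y \<le> 0" if "s < x" "x < t" for x
      using F[of x] F'_nonpos[of x] that \<open>0 \<le> s\<close> \<open>t \<le> 1\<close> by auto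
    show "continuous_on {s..t} profile"
      by (rule continuous_on_subset[OF F_cont]) (use that in auto)
  qed
  have mono: "profile s \<le> profile t" if "1 \<le> s" "s \<le> t" for s t
  proof (rule DERIV_nonneg_imp_increasing_open[OF \<open>s \<le> t\<close>])
    show "\<exists>y. DERIV profile x :> y \<and> y \<ge> 0" if "s < x" "x < t" for x
      using F[of x] F'_nonneg[of x] that \<open>1 \<le> s\<close> by auto
    show "continuous_on {s..t} profile"
      using F DERIV_isCont that by (intro continuous_at_imp_continuous_on ballI) force
  qed
  have F_0: "0 \<le> profile 0" using antimono[of 0 1] F_1 by simp
  have pos: "0 < profile s" if "0 < s" "s < 1" for s
  proof -
    have "0 < profile_quot s"
      using quot_strict_mono[of 0 s] F_0 that by (simp add: profile_quot_def)
    then show ?thesis by (simp add: profile_quot_def zero_less_divide_iff)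
  qed
  interpret profile_metric h
  proof
    show "profile 1 = 0" by (rule F_1)
    show "0 < profile s" if "0 \<le> s" "s < 1" for s
      using pos[of s] pos[of "1/2"] antimono[of 0 "1/2"] that by (cases "s = 0") auto
    show "profile t \<le> profile s" if "0 \<le> s" "s \<le> t" "t \<le> 1" for s t
      using antimono that .
    show "profile s \<le> profile t" if "1 \<le> s" "s \<le> t" for s t
      using mono that .
    show "profile_quot s \<le> profile_quot t" if "0 \<le> s" "s \<le> t" "t < 1" for s t
      using quot_strict_mono[of s t] that by (cases "s = t") auto
  qed
  show ?thesis by (rule metric)
qed

end

lemma power_mean_commute: "power_mean q r t = power_mean q t r"
  unfolding power_mean_def by (auto simp: mult.commute add.commute)

lemma H_commute: "H p r t = H p t r"
  unfolding H_def using power_mean_commute by (auto simp: add.commute)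

lemma power_mean_homogeneous:
  assumes c: "0 < c" and "0 \<le> r" "0 \<le> t"
  shows "power_mean q (c * r) (c * t) = c * power_mean q r t"
proof (cases "q = 0 \<or> q < 0 \<and> (r = 0 \<or> t = 0)")
  case True
  then show ?thesis
    using assms by (auto simp: power_mean_def real_sqrt_mult ac_simps)
next
  case False
  have "((c * r) powr q + (c * t) powr q) / 2 = c powr q * ((r powr q + t powr q) / 2)"
    by (simp add: powr_mult field_simps)
  then have "(((c * r) powr q + (c * t) powr q) / 2) powr (1 / q)
      = (c powr q) powr (1 / q) * ((r powr q + t powr q) / 2) powr (1 / q)"
    by (simp only: powr_mult)
  also have "(c powr q) powr (1 / q) = c" using False c by (simp add: powr_powr)
  finally show ?thesis using False c by (auto simp: power_mean_def)
qed

lemma xlnx_mult: "0 < c \<Longrightarrow> 0 \<le> r \<Longrightarrow> xlnx (c * r) = c * xlnx r + c * r * ln c"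
  by (auto simp: xlnx_def ln_mult algebra_simps)

lemma H_homogeneous:
  assumes c: "0 < c" and r: "0 \<le> r" and t: "0 \<le> t"
  shows "H p (c * r) (c * t) = c * H p r t"
proof (cases "p = 0 \<and> r + t \<noteq> 0")
  case True
  then have "ln ((c * r + c * t) / 2) = ln c + ln ((r + t) / 2)"
    using c r t by (simp add: ln_mult_pos flip: distrib_left times_divide_eq_right)
  moreover have "c * r + c * t \<noteq> 0" using True c r t by (simp flip: distrib_left)
  ultimately show ?thesis using True xlnx_mult[OF c r] xlnx_mult[OF c t]
    unfolding H_def by (simp add: algebra_simps)
next
  case False
  then show ?thesis
    using power_mean_homogeneous[OF c r t] r t by (auto simp: H_def algebra_simps xlnx_def)
qed

interpretation H: sym_homogeneous "H p" for p
  by unfold_locales (simp_all add: H_commute H_homogeneous)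

lemma H_eq_sqrt_diff_sq:
  assumes "p = 1 \<or> p = 1/2" "0 \<le> r" "0 \<le> t"
  shows "H p r t = (sqrt r - sqrt t)^2"
proof -
  have M1: "power_mean 1 r t = (r + t) / 2" using assms by (simp add: power_mean_def)
  have "power_mean (1/2) r t = ((sqrt r + sqrt t) / 2) powr 2"
    using assms by (simp add: power_mean_def powr_half_sqrt)
  also have "\<dots> = ((sqrt r + sqrt t) / 2)^2"
    using assms by (simp add: powr_realpow')
  finally have M_half: "power_mean (1/2) r t = ((sqrt r + sqrt t) / 2)^2" .
  from assms(1) show ?thesis
  proof
    assume "p = 1"
    then show ?thesis
      using assms M1
      by (simp add: H_def power_mean_def real_sqrt_mult power2_eq_square algebra_simps)
  next
    assume p: "p = 1/2"
    show ?thesis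
      using assms M1 M_half unfolding p H_def by (simp add: power2_eq_square algebra_simps)
  qed
qed

lemma H_profile_1: "H.profile p 1 = 0"
  by (simp add: H.profile_def H_def power_mean_def xlnx_def)

lemma metric_sqrt_H_one_half_one:
  assumes "p = 1 \<or> p = 1/2"
  shows "metric_on_nonneg (\<lambda>x y. sqrt (H p x y))"
  unfolding metric_on_nonneg_def using H_eq_sqrt_diff_sq[OF assms] by auto

lemma xlnx_continuous_on: "continuous_on {0..} xlnx"
  unfolding continuous_on_eq_continuous_within
proof
  fix x :: real assume "x \<in> {0..}"
  show "continuous (at x within {0..}) xlnx"
  proof (cases "x = 0")
    case True
    have "((\<lambda>x::real. x * ln x) \<longlongrightarrow> 0) (at_right 0)" by real_asymp
    then have "(xlnx \<longlongrightarrow> 0) (at_right 0)"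
      by (rule Lim_transform_eventually) (auto simp: xlnx_def eventually_at_right_less)
    then show ?thesis
      using True by (simp add: continuous_within at_within_Ici_at_right xlnx_def)
  next
    case False
    have "\<forall>\<^sub>F y in nhds x. y * ln y = xlnx y"
      using t1_space_nhds[OF False] by eventually_elim (simp add: xlnx_def)
    moreover have "isCont (\<lambda>x. x * ln x) x" using False by (auto intro!: continuous_intros)
    ultimately have "isCont xlnx x" by (simp add: isCont_cong)
    then show ?thesis by (rule continuous_at_imp_continuous_at_within)
  qed
qed

definition H0_profile' :: "real \<Rightarrow> real" where
  "H0_profile' s = 2 * s * (ln 2 + 2 * ln s - ln (1 + s^2))"

definition H0_profile'' :: "real \<Rightarrow> real" where
  "H0_profile'' s = 2 * (ln 2 + 2 * ln s - ln (1 + s^2)) + 4 / (1 + s^2)"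

definition H0_profile''' :: "real \<Rightarrow> real" where
  "H0_profile''' s = 4 * (1 - s^2) / (s * (1 + s^2)^2)"

lemma H0_profile_eq: "0 < s \<Longrightarrow> H.profile 0 s = 2 * s^2 * ln s - (1 + s^2) * (ln (1 + s^2) - ln 2)"
  by (simp add: H.profile_def H_def xlnx_def ln_realpow ln_div add_pos_nonneg add.commute)

lemma has_real_derivative_H0_profile:
  assumes "0 < s"
  shows "(H.profile 0 has_real_derivative H0_profile' s) (at s)"
proof -
  \<comment> \<open>Naming \<open>1 + s^2\<close> keeps \<open>field_simps\<close> from expanding its powers.\<close>
  define u where "u = 1 + s^2"
  have "0 < u" by (simp add: u_def add_pos_nonneg)
  have "((\<lambda>s. 2 * s^2 * ln s - (1 + s^2) * (ln (1 + s^2) - ln 2)) has_real_derivative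
      H0_profile' s) (at s)"
    using assms \<open>0 < u\<close> unfolding H0_profile'_def
    by (auto intro!: derivative_eq_intros simp flip: u_def) (simp add: field_simps power2_eq_square)
  then show ?thesis
    by (rule has_field_derivative_transform_within_open[of _ _ _ "{0<..}"])
       (use assms H0_profile_eq in auto)
qed

lemma has_real_derivative_H0_profile':
  assumes "0 < s"
  shows "(H0_profile' has_real_derivative H0_profile'' s) (at s)"
proof -
  define u where "u = 1 + s^2"
  have "0 < u" by (simp add: u_def add_pos_nonneg)
  then show ?thesis
    unfolding H0_profile'_def[abs_def] H0_profile''_def using assms
    by (auto intro!: derivative_eq_intros simp flip: u_def)
       (simp add: field_simps power2_eq_square, simp add: u_def algebra_simps power2_eq_square)
qed

lemma has_real_derivative_H0_profile'':
  assumes "0 < s"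
  shows "(H0_profile'' has_real_derivative H0_profile''' s) (at s)"
proof -
  define u where "u = 1 + s^2"
  have "0 < u" by (simp add: u_def add_pos_nonneg)
  then show ?thesis
    unfolding H0_profile''_def[abs_def] H0_profile'''_def using assms
    by (auto intro!: derivative_eq_intros simp flip: u_def)
       (simp add: field_simps power2_eq_square, simp add: u_def algebra_simps power2_eq_square)
qed

lemma H0_profile'_nonpos:
  assumes "0 < s" "s < 1"
  shows "H0_profile' s \<le> 0"
proof -
  have "ln (2 * s^2) \<le> ln (1 + s^2)"
    using assms power_strict_mono[of s 1 2] by (simp add: add_pos_nonneg)
  then show ?thesis
    using assms by (simp add: H0_profile'_def ln_mult ln_realpow mult_nonneg_nonpos)
qed

lemma H0_profile'_nonneg:
  assumes "1 < s"
  shows "0 \<le> H0_profile' s"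
proof -
  have "ln (1 + s^2) \<le> ln (2 * s^2)"
    using assms by (simp add: add_pos_nonneg)
  then show ?thesis
    using assms by (simp add: H0_profile'_def ln_mult ln_realpow)
qed

lemma H0_profile'''_pos:
  assumes "0 < s" "s < 1"
  shows "0 < H0_profile''' s"
proof -
  have "0 < 1 + s^2" "s^2 < 1"
    using assms power_strict_mono[of s 1 2] by (auto simp: add_pos_nonneg)
  then show ?thesis using assms by (simp add: H0_profile'''_def)
qed

lemma continuous_on_H0_profile: "continuous_on {0..} (H.profile 0)"
proof -
  have pos: "0 < s^2 + 1" for s :: real by (simp add: add_nonneg_pos)
  have "continuous_on {0..} (\<lambda>s::real. xlnx (s^2) - (s^2 + 1) * ln ((s^2 + 1) / 2))"
    by (intro continuous_intros continuous_on_compose2[OF xlnx_continuous_on])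
       (use pos[THEN less_imp_neq] in auto)
  then show ?thesis
    by (rule continuous_on_cong[THEN iffD1, rotated 2])
       (auto simp: H.profile_def H_def xlnx_def pos[THEN less_imp_neq, symmetric])
qed

lemma metric_sqrt_H_zero: "metric_on_nonneg (\<lambda>x y. sqrt (H 0 x y))"
proof (rule H.metric_if_profile_derivatives)
  fix s :: real
  show "0 < s \<Longrightarrow> (H.profile 0 has_real_derivative H0_profile' s) (at s)"
    by (rule has_real_derivative_H0_profile)
  show "0 < s \<Longrightarrow> (H0_profile' has_real_derivative H0_profile'' s) (at s)"
    by (rule has_real_derivative_H0_profile')
  show "0 < s \<Longrightarrow> (H0_profile'' has_real_derivative H0_profile''' s) (at s)"
    by (rule has_real_derivative_H0_profile'')
  show "0 < s \<Longrightarrow> s < 1 \<Longrightarrow> 0 < H0_profile''' s" by (rule H0_profile'''_pos)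
  show "0 < s \<Longrightarrow> s < 1 \<Longrightarrow> H0_profile' s \<le> 0" by (rule H0_profile'_nonpos)
  show "1 < s \<Longrightarrow> 0 \<le> H0_profile' s" by (rule H0_profile'_nonneg)
next
  show "H.profile 0 1 = 0" by (rule H_profile_1)
  show "H0_profile' 1 = 0" by (simp add: H0_profile'_def)
  show "continuous_on {0..1} (H.profile 0)"
    by (rule continuous_on_subset[OF continuous_on_H0_profile]) auto
qed

text \<open>For \<open>s > 0\<close>, \<open>pm_sq q s\<close> is the power mean \<open>M\<^sub>q(s\<^sup>2, 1)\<close> (see \<open>H_profile_eq\<close>) and
  \<open>pm_ratio q s = s \<cdot> pm_sq' / pm_sq\<close> its logarithmic derivative.  The product
  \<open>pm_sq \<cdot> pm_ratio / s\<^sup>2\<close> occurring in the first derivative of the profile is written as the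
  power \<open>pm_quot\<close> of \<open>pm_ratio\<close>, whose sign against \<open>1\<close> is that of \<open>q ln s\<close>.\<close>
definition pm_sq :: "real \<Rightarrow> real \<Rightarrow> real" where
  "pm_sq q s = ((1 + s powr (2 * q)) / 2) powr (1 / q)"

definition pm_ratio :: "real \<Rightarrow> real \<Rightarrow> real" where
  "pm_ratio q s = 2 * s powr (2 * q) / (1 + s powr (2 * q))"

definition pm_quot :: "real \<Rightarrow> real \<Rightarrow> real" where
  "pm_quot q s = pm_ratio q s powr (1 - 1 / q)"

lemma one_add_powr_pos [simp]: "0 < 1 + (x::real) powr a"
  by (simp add: add_pos_nonneg)

lemma one_add_powr_nonzero [simp]: "1 + (x::real) powr a \<noteq> 0"
  using one_add_powr_pos[of x a] by linarith

lemma pm_sq_pos: "0 < pm_sq q s"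
  by (simp add: pm_sq_def)

lemma pm_ratio_pos: "0 < s \<Longrightarrow> 0 < pm_ratio q s"
  by (simp add: pm_ratio_def)

lemma pm_quot_pos: "0 < s \<Longrightarrow> 0 < pm_quot q s"
  using pm_ratio_pos[of s q] by (simp add: pm_quot_def)

lemma pm_ratio_less_2: "pm_ratio q s < 2"
  by (simp add: pm_ratio_def divide_less_eq)

lemma sgn_exp_minus_one: "sgn (exp x - 1) = sgn (x :: real)"
  by (cases x "0::real" rule: linorder_cases) auto

lemma sgn_one_minus_exp: "sgn (1 - exp x) = - sgn (x :: real)"
  by (cases x "0::real" rule: linorder_cases) auto

lemma sgn_ln: "0 < x \<Longrightarrow> sgn (ln x) = sgn (x - 1 :: real)"
  by (cases x "1::real" rule: linorder_cases) auto

lemma sgn_pm_ratio_minus_one: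
  assumes "0 < s"
  shows "sgn (pm_ratio q s - 1) = sgn (q * ln s)"
proof -
  have "pm_ratio q s - 1 = (s powr (2 * q) - 1) / (1 + s powr (2 * q))"
    by (simp add: pm_ratio_def field_simps)
  also have "s powr (2 * q) = exp (2 * q * ln s)"
    using assms by (simp add: powr_def ac_simps)
  finally have "pm_ratio q s - 1 = (exp (2 * q * ln s) - 1) / (1 + exp (2 * q * ln s))" .
  moreover have "0 < 1 + exp (2 * q * ln s)" by (simp add: add_pos_pos)
  ultimately show ?thesis
    using sgn_exp_minus_one[of "2 * q * ln s"] by (simp add: sgn_mult)
qed

lemma pm_sq_mult_pm_ratio:
  assumes "0 < s" "q \<noteq> 0"
  shows "pm_sq q s * pm_ratio q s = s^2 * pm_quot q s"
proof -
  define A where "A = (1 + s powr (2 * q)) / 2"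
  have "0 < A" by (simp add: A_def)
  have "pm_quot q s = pm_ratio q s / pm_ratio q s powr (1 / q)"
    using pm_ratio_pos[OF assms(1), of q] by (simp add: pm_quot_def powr_diff)
  also have "pm_ratio q s powr (1 / q) = (s powr (2 * q)) powr (1 / q) / A powr (1 / q)"
  proof -
    have "pm_ratio q s = s powr (2 * q) / A" by (simp add: pm_ratio_def A_def)
    then show ?thesis using \<open>0 < A\<close> by (simp add: powr_divide)
  qed
  also have "\<dots> = s^2 / pm_sq q s"
    using assms by (simp add: powr_powr powr_realpow pm_sq_def A_def)
  finally show ?thesis
    using assms pm_sq_pos[of q s] by (simp add: field_simps)
qed

lemma has_real_derivative_pm_sq:
  assumes "0 < s" "q \<noteq> 0"
  shows "(pm_sq q has_real_derivative pm_sq q s * pm_ratio q s / s) (at s)"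
proof -
  define A where "A = (1 + s powr (2 * q)) / 2"
  have "0 < A" by (simp add: A_def)
  have "(pm_sq q has_real_derivative
      (1 / q) * A powr (1 / q - of_nat 1) * (q * s powr (2 * q) / s)) (at s)"
    unfolding pm_sq_def[abs_def] A_def using assms
    by (intro DERIV_fun_powr) (auto intro!: derivative_eq_intros simp: powr_diff)
  also have "(1 / q) * A powr (1 / q - of_nat 1) * (q * s powr (2 * q) / s)
      = pm_sq q s * pm_ratio q s / s"
  proof -
    have "pm_sq q s = A powr (1 / q)" "pm_ratio q s = s powr (2 * q) / A"
      by (simp_all add: pm_sq_def pm_ratio_def A_def)
    then show ?thesis
      using assms \<open>0 < A\<close> by (simp only: powr_diff) (simp add: field_simps)
  qed
  finally show ?thesis .
qed

lemma has_real_derivative_pm_ratio: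
  assumes "0 < s"
  shows "(pm_ratio q has_real_derivative q * pm_ratio q s * (2 - pm_ratio q s) / s) (at s)"
  unfolding pm_ratio_def[abs_def] using assms
  by (auto intro!: derivative_eq_intros simp: powr_diff field_simps)

lemma has_real_derivative_pm_quot:
  assumes "0 < s" "q \<noteq> 0"
  shows "(pm_quot q has_real_derivative pm_quot q s * (q - 1) * (2 - pm_ratio q s) / s) (at s)"
proof -
  let ?R = "pm_ratio q s"
  have "(pm_quot q has_real_derivative
      (1 - 1 / q) * ?R powr (1 - 1 / q - of_nat 1) * (q * ?R * (2 - ?R) / s)) (at s)"
    unfolding pm_quot_def[abs_def]
    by (intro DERIV_fun_powr has_real_derivative_pm_ratio pm_ratio_pos assms)
  also have "(1 - 1 / q) * ?R powr (1 - 1 / q - of_nat 1) * (q * ?R * (2 - ?R) / s)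
      = pm_quot q s * (q - 1) * (2 - ?R) / s"
    using assms pm_ratio_pos[OF assms(1), of q]
    by (simp only: powr_diff[of ?R "1 - 1 / q"] pm_quot_def[symmetric]) (simp add: field_simps)
  finally show ?thesis .
qed

definition H_profile' :: "real \<Rightarrow> real \<Rightarrow> real" where
  "H_profile' p s = 2 / p * s * (1 - pm_quot (1 - p) s)"

definition H_profile'' :: "real \<Rightarrow> real \<Rightarrow> real" where
  "H_profile'' p s = 2 / p * (1 - pm_quot (1 - p) s * (1 - 2 * p + p * pm_ratio (1 - p) s))"

definition H_profile''' :: "real \<Rightarrow> real \<Rightarrow> real" where
  "H_profile''' p s =
     2 * pm_quot (1 - p) s * (2 - pm_ratio (1 - p) s) * (1 - 2 * p) * (1 - pm_ratio (1 - p) s) / s"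

lemma H_profile_eq:
  assumes "0 < s" "p \<noteq> 0" "p \<noteq> 1"
  shows "H.profile p s = 2 / p * ((1 + s^2) / 2 - pm_sq (1 - p) s)"
proof -
  have "(s^2) powr (1 - p) = s powr (2 * (1 - p))"
    using assms by (simp add: powr_powr flip: powr_numeral)
  then have "power_mean (1 - p) (s^2) 1 = pm_sq (1 - p) s"
    using assms by (simp add: power_mean_def pm_sq_def add.commute)
  then show ?thesis
    using assms by (simp add: H.profile_def H_def power_mean_def add.commute)
qed

lemma has_real_derivative_H_profile:
  assumes "0 < s" "p \<noteq> 0" "p \<noteq> 1"
  shows "(H.profile p has_real_derivative H_profile' p s) (at s)"
proof -
  have "((\<lambda>s. 2 / p * ((1 + s^2) / 2 - pm_sq (1 - p) s)) has_real_derivative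
      2 / p * (s - pm_sq (1 - p) s * pm_ratio (1 - p) s / s)) (at s)"
    using assms by (auto intro!: derivative_eq_intros has_real_derivative_pm_sq)
  also have "2 / p * (s - pm_sq (1 - p) s * pm_ratio (1 - p) s / s) = H_profile' p s"
    using assms pm_sq_mult_pm_ratio[of s "1 - p"]
    by (simp add: H_profile'_def power2_eq_square field_simps)
  finally show ?thesis
    by (rule has_field_derivative_transform_within_open[of _ _ _ "{0<..}"])
       (use assms H_profile_eq in auto)
qed

lemma has_real_derivative_H_profile':
  assumes "0 < s" "p \<noteq> 0" "p \<noteq> 1"
  shows "(H_profile' p has_real_derivative H_profile'' p s) (at s)"
  unfolding H_profile'_def[abs_def] H_profile''_def using assms
  by (auto intro!: derivative_eq_intros has_real_derivative_pm_quot) (simp add: algebra_simps)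

lemma has_real_derivative_H_profile'':
  assumes "0 < s" "p \<noteq> 0" "p \<noteq> 1"
  shows "(H_profile'' p has_real_derivative H_profile''' p s) (at s)"
  unfolding H_profile''_def[abs_def] H_profile'''_def using assms
  by (auto intro!: derivative_eq_intros has_real_derivative_pm_quot has_real_derivative_pm_ratio)
     (simp add: field_simps)

lemma H_profile'_1: "H_profile' p 1 = 0"
  by (simp add: H_profile'_def pm_quot_def pm_ratio_def)

lemma sgn_H_profile':
  assumes "0 < s" "p \<noteq> 0" "p \<noteq> 1"
  shows "sgn (H_profile' p s) = sgn (ln s)"
proof -
  let ?R = "pm_ratio (1 - p) s"
  have "pm_quot (1 - p) s = exp (- (p / (1 - p) * ln ?R))"
    using pm_ratio_pos[OF assms(1), of "1 - p"] assms
    by (simp add: pm_quot_def powr_def field_simps)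
  then have "sgn (1 - pm_quot (1 - p) s) = sgn (p / (1 - p) * ln ?R)"
    by (simp add: sgn_one_minus_exp del: sgn_mult)
  also have "\<dots> = sgn (p / (1 - p)) * sgn ((1 - p) * ln s)"
    using sgn_ln[OF pm_ratio_pos[OF assms(1)]] sgn_pm_ratio_minus_one[OF assms(1)]
    by (simp add: sgn_mult)
  also have "\<dots> = sgn (p / (1 - p) * ((1 - p) * ln s))"
    by (simp only: sgn_mult)
  also have "p / (1 - p) * ((1 - p) * ln s) = p * ln s"
    using assms by simp
  finally have "sgn (1 - pm_quot (1 - p) s) = sgn (p * ln s)" .
  then have "sgn (H_profile' p s) = sgn (2 / p * s * (p * ln s))"
    by (simp add: H_profile'_def sgn_mult)
  also have "\<dots> = sgn (ln s)"
    using assms by (simp add: sgn_mult)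
  finally show ?thesis .
qed

lemma sgn_H_profile''':
  assumes "0 < s" "s < 1"
  shows "sgn (H_profile''' p s) = sgn ((1 - 2 * p) * (1 - p))"
proof -
  let ?R = "pm_ratio (1 - p) s"
  have "sgn (?R - 1) = - sgn (1 - p)"
    using sgn_pm_ratio_minus_one[OF assms(1), of "1 - p"] assms by (simp add: sgn_mult)
  then have "sgn (1 - ?R) = sgn (1 - p)"
    by (metis minus_diff_eq sgn_minus)
  moreover have "0 < 2 * pm_quot (1 - p) s * (2 - ?R) / s"
    using pm_quot_pos[OF assms(1)] pm_ratio_less_2 assms by simp
  moreover have "H_profile''' p s = 2 * pm_quot (1 - p) s * (2 - ?R) / s * ((1 - 2 * p) * (1 - ?R))"
    by (simp add: H_profile'''_def)
  ultimately show ?thesis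
    by (metis mult_cancel_right1 sgn_mult sgn_pos)
qed

lemma power_mean_one_neg:
  assumes "q < 0" "0 \<le> r"
  shows "power_mean q r 1 = r * ((1 + r powr (- q)) / 2) powr (1 / q)"
proof (cases "r = 0")
  case False
  then have r: "0 < r" using assms by simp
  have "(r powr q + 1) / 2 = r powr q * ((1 + r powr (- q)) / 2)"
    using r by (simp add: field_simps powr_minus)
  then have "((r powr q + 1) / 2) powr (1 / q)
      = (r powr q) powr (1 / q) * ((1 + r powr (- q)) / 2) powr (1 / q)"
    by (simp only: powr_mult)
  then show ?thesis
    using assms r by (simp add: power_mean_def powr_powr)
qed (use assms in \<open>simp add: power_mean_def\<close>)

lemma continuous_on_power_mean_one:
  assumes "q \<noteq> 0"
  shows "continuous_on {0..} (\<lambda>r. power_mean q r 1)"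
proof (cases "0 < q")
  case True
  have "continuous_on {0..} (\<lambda>r::real. ((r powr q + 1) / 2) powr (1 / q))"
    using True
    by (intro continuous_on_powr continuous_intros continuous_on_powr') (auto simp: add_nonneg_pos)
  then show ?thesis
    by (rule continuous_on_cong[THEN iffD1, rotated 2]) (use True in \<open>auto simp: power_mean_def\<close>)
next
  case False
  then have "q < 0" using assms by simp
  have "continuous_on {0..} (\<lambda>r::real. r * ((1 + r powr (- q)) / 2) powr (1 / q))"
    using \<open>q < 0\<close> by (intro continuous_on_powr continuous_intros continuous_on_powr') auto
  then show ?thesis
    by (rule continuous_on_cong[THEN iffD1, rotated 2]) (use \<open>q < 0\<close> power_mean_one_neg in auto)
qed

lemma continuous_on_H_profile:
  assumes "p \<noteq> 0" "p \<noteq> 1"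
  shows "continuous_on {0..} (H.profile p)"
proof -
  have "continuous_on {0..} (\<lambda>s::real. 2 / p * ((s^2 + 1) / 2 - power_mean (1 - p) (s^2) 1))"
    using assms
    by (intro continuous_intros continuous_on_compose2[OF continuous_on_power_mean_one]) auto
  then show ?thesis
    by (rule continuous_on_cong[THEN iffD1, rotated 2])
       (use assms in \<open>auto simp: H.profile_def H_def power_mean_def\<close>)
qed

lemma metric_sqrt_H:
  assumes "p \<noteq> 0" "p < 1/2 \<or> 1 < p"
  shows "metric_on_nonneg (\<lambda>x y. sqrt (H p x y))"
proof -
  have "p \<noteq> 1" using assms by auto
  have "0 < (1 - 2 * p) * (1 - p)"
    using assms(2) by (auto intro: mult_pos_pos mult_neg_neg)
  show ?thesis
  proof (rule H.metric_if_profile_derivatives)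
    fix s :: real
    show "0 < s \<Longrightarrow> (H.profile p has_real_derivative H_profile' p s) (at s)"
      using has_real_derivative_H_profile assms \<open>p \<noteq> 1\<close> by blast
    show "0 < s \<Longrightarrow> (H_profile' p has_real_derivative H_profile'' p s) (at s)"
      using has_real_derivative_H_profile' assms \<open>p \<noteq> 1\<close> by blast
    show "0 < s \<Longrightarrow> (H_profile'' p has_real_derivative H_profile''' p s) (at s)"
      using has_real_derivative_H_profile'' assms \<open>p \<noteq> 1\<close> by blast
    show "0 < s \<Longrightarrow> s < 1 \<Longrightarrow> 0 < H_profile''' p s"
      using sgn_H_profile'''[of s p] \<open>0 < (1 - 2 * p) * (1 - p)\<close> by (simp add: sgn_1_pos)
    show "0 < s \<Longrightarrow> s < 1 \<Longrightarrow> H_profile' p s \<le> 0"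
      using sgn_H_profile'[of s p] assms \<open>p \<noteq> 1\<close> by (simp add: sgn_1_neg)
    show "1 < s \<Longrightarrow> 0 \<le> H_profile' p s"
      using sgn_H_profile'[of s p] assms \<open>p \<noteq> 1\<close> by (simp add: sgn_1_pos)
  next
    show "H.profile p 1 = 0" by (rule H_profile_1)
    show "H_profile' p 1 = 0" by (rule H_profile'_1)
    show "continuous_on {0..1} (H.profile p)"
      by (rule continuous_on_subset[OF continuous_on_H_profile]) (use assms \<open>p \<noteq> 1\<close> in auto)
  qed
qed

lemma H_profile_quot_strict_antimono:
  assumes "1/2 < p" "p < 1" "0 \<le> a" "a < b" "b < 1"
  shows "H.profile_quot p b < H.profile_quot p a"
proof -
  have p: "p \<noteq> 0" "p \<noteq> 1" using assms by auto
  have "- H.profile p a / (1 - a)^2 < - H.profile p b / (1 - b)^2"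
  proof (rule third_derivative_pos_imp_quotient_strict_mono[where F' = "\<lambda>s. - H_profile' p s"
        and F'' = "\<lambda>s. - H_profile'' p s" and F''' = "\<lambda>s. - H_profile''' p s"])
    fix s :: real
    show "0 < s \<Longrightarrow> ((\<lambda>s. - H.profile p s) has_real_derivative - H_profile' p s) (at s)"
      using has_real_derivative_H_profile p by (auto intro: DERIV_minus)
    show "0 < s \<Longrightarrow> ((\<lambda>s. - H_profile' p s) has_real_derivative - H_profile'' p s) (at s)"
      using has_real_derivative_H_profile' p by (auto intro: DERIV_minus)
    show "0 < s \<Longrightarrow> ((\<lambda>s. - H_profile'' p s) has_real_derivative - H_profile''' p s) (at s)"
      using has_real_derivative_H_profile'' p by (auto intro: DERIV_minus)
    have "(1 - 2 * p) * (1 - p) < 0" using assms by (intro mult_neg_pos) auto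
    then show "0 < s \<Longrightarrow> s < 1 \<Longrightarrow> 0 < - H_profile''' p s"
      using sgn_H_profile'''[of s p] by (simp add: sgn_1_neg)
  next
    show "- H.profile p 1 = 0" by (simp add: H_profile_1)
    show "- H_profile' p 1 = 0" by (simp add: H_profile'_1)
    show "continuous_on {0..1} (\<lambda>s. - H.profile p s)"
      by (intro continuous_intros continuous_on_subset[OF continuous_on_H_profile[OF p]]) auto
  qed (use assms in auto)
  then show ?thesis by (simp add: H.profile_quot_def)
qed

text \<open>The points \<open>1, 4, 9\<close> are equally spaced in the square-root scale, so the triangle
  inequality for them would force \<open>profile_quot (1/3)\<close> below \<open>profile_quot (1/2)\<close> or
  \<open>profile_quot (2/3)\<close>.\<close>
lemma not_triangle_sqrt_H:
  assumes "1/2 < p" "p < 1"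
  shows "\<not> triangle_on_nonneg (\<lambda>x y. sqrt (H p x y))"
proof
  assume "triangle_on_nonneg (\<lambda>x y. sqrt (H p x y))"
  then have "sqrt (H p (1^2) (3^2)) \<le> sqrt (H p (1^2) (2^2)) + sqrt (H p (2^2) (3^2))"
    unfolding triangle_on_nonneg_def by simp
  then have "2 * sqrt (H.profile_quot p (1/3))
      \<le> sqrt (H.profile_quot p (1/2)) + sqrt (H.profile_quot p (2/3))"
    using H.sqrt_h_sq_eq[of 1 3 p] H.sqrt_h_sq_eq[of 1 2 p] H.sqrt_h_sq_eq[of 2 3 p] by simp
  moreover have "sqrt (H.profile_quot p (1/2)) < sqrt (H.profile_quot p (1/3))"
    "sqrt (H.profile_quot p (2/3)) < sqrt (H.profile_quot p (1/3))"
    using H_profile_quot_strict_antimono[OF assms] by simp_all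
  ultimately show False by linarith
qed

theorem mainTheorem1:
  shows "(\<forall>p::real. (p \<le> 1/2 \<or> 1 \<le> p) \<longrightarrow> metric_on_nonneg (\<lambda>x y. sqrt (H p x y))) \<and>
         (\<forall>p::real. 1/2 < p \<and> p < 1 \<longrightarrow> \<not> triangle_on_nonneg (\<lambda>x y. sqrt (H p x y)))"
proof (intro conjI allI impI)
  fix p :: real
  assume "p \<le> 1/2 \<or> 1 \<le> p"
  then consider "p = 0" | "p = 1 \<or> p = 1/2" | "p \<noteq> 0" "p < 1/2 \<or> 1 < p"
    by linarith
  then show "metric_on_nonneg (\<lambda>x y. sqrt (H p x y))"
    by cases (auto intro: metric_sqrt_H_zero metric_sqrt_H_one_half_one metric_sqrt_H)
next
  fix p :: real
  assume "1/2 < p \<and> p < 1"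
  then show "\<not> triangle_on_nonneg (\<lambda>x y. sqrt (H p x y))"
    using not_triangle_sqrt_H by blast
qed

end
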